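(* Let $m,n\geq 2$ be two distinct integers and $k\geq 2$. Then $$\Phi_k (P_m \square P_n)=\frac{1}{4}\left( k^{mn}-k^{m\lceil \frac{n}{2}\rceil}-k^{n\lceil \frac{m}{2}\rceil} -k^{\lceil \frac{mn}{2}\rceil} +2 k^{\lceil \frac{m}{2}\rceil\lceil \frac{n}{2}\rceil}\right).$$
   Context: $P_n$ is the path on $n$ vertices and $\square$ is the Cartesian product ($V(G\square H)=V(G)\times V(H)$, $(g,h)\sim(g',h')$ iff $g=g'$ and $hh'\in E(H)$, or $gg'\in E(G)$ and $h=h'$). A vertex coloring is distinguishing if the identity is the only automorphism preserving it. Two colorings $c_1,c_2$ of a graph $G$ are equivalent if there is an automorphism $\alpha$ of $G$ with $c_1(v)=c_2(\alpha(v))$ for all $v\in V(G)$. $\Phi_k(G)$ denotes the number of non-equivalent distinguishing vertex colorings of $G$ with colors from $\{1,\ldots,k\}$ (not all colors need be used). *)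

theory Defs
  imports Complex_Main "HOL-Library.FuncSet"
begin

definition is_automorphism :: "'a set \<Rightarrow> ('a \<Rightarrow> 'a \<Rightarrow> bool) \<Rightarrow> ('a \<Rightarrow> 'a) \<Rightarrow> bool" where
  "is_automorphism V E f \<longleftrightarrow>
     bij_betw f V V \<and> (\<forall>u\<in>V. \<forall>v\<in>V. E u v \<longleftrightarrow> E (f u) (f v))"

definition distinguishing :: "'a set \<Rightarrow> ('a \<Rightarrow> 'a \<Rightarrow> bool) \<Rightarrow> ('a \<Rightarrow> 'b) \<Rightarrow> bool" where
  "distinguishing V E c \<longleftrightarrow>
     (\<forall>f. is_automorphism V E f \<and> (\<forall>v\<in>V. c (f v) = c v) \<longrightarrow> (\<forall>v\<in>V. f v = v))"

definition colorings :: "'a set \<Rightarrow> nat \<Rightarrow> ('a \<Rightarrow> nat) set" where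
  "colorings V k = V \<rightarrow>\<^sub>E {1..k}"

definition equivalent_colorings ::
  "'a set \<Rightarrow> ('a \<Rightarrow> 'a \<Rightarrow> bool) \<Rightarrow> nat \<Rightarrow> (('a \<Rightarrow> nat) \<times> ('a \<Rightarrow> nat)) set" where
  "equivalent_colorings V E k =
     {(c1, c2). c1 \<in> colorings V k \<and> c2 \<in> colorings V k \<and>
        (\<exists>\<alpha>. is_automorphism V E \<alpha> \<and> (\<forall>v\<in>V. c1 v = c2 (\<alpha> v)))}"

definition Phi :: "nat \<Rightarrow> 'a set \<Rightarrow> ('a \<Rightarrow> 'a \<Rightarrow> bool) \<Rightarrow> nat" where
  "Phi k V E = card ({c \<in> colorings V k. distinguishing V E c} // equivalent_colorings V E k)"

definition path_V :: "nat \<Rightarrow> nat set" where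
  "path_V n = {0..<n}"

definition path_E :: "nat \<Rightarrow> nat \<Rightarrow> bool" where
  "path_E i j \<longleftrightarrow> i + 1 = j \<or> j + 1 = i"

definition cart_V :: "'a set \<Rightarrow> 'b set \<Rightarrow> ('a \<times> 'b) set" where
  "cart_V V1 V2 = V1 \<times> V2"

definition cart_E :: "('a \<Rightarrow> 'a \<Rightarrow> bool) \<Rightarrow> ('b \<Rightarrow> 'b \<Rightarrow> bool) \<Rightarrow> 'a \<times> 'b \<Rightarrow> 'a \<times> 'b \<Rightarrow> bool" where
  "cart_E E1 E2 x y \<longleftrightarrow>
     (fst x = fst y \<and> E2 (snd x) (snd y)) \<or> (E1 (fst x) (fst y) \<and> snd x = snd y)"

end

theory Submission
  imports Defs
begin

text \<open>
  Every automorphism of a graph preserves the length of shortest walks; on the grid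
  \<open>P\<^sub>m \<box> P\<^sub>n\<close> this is the Manhattan distance. Hence automorphisms permute the corners,
  and since a vertex is determined by its distances to three corners and \<open>m \<noteq> n\<close>
  rules out the diagonal symmetries, the automorphisms are exactly the four reflections
  generated by the two axis reflections. This group acts freely on distinguishing colorings,
  so \<open>\<Phi>\<^sub>k\<close> is a quarter of their number. A coloring is not distinguishing iff it is
  invariant under one of the three non-identity reflections, and any two of them generate
  the whole group; inclusion-exclusion therefore only needs the numbers of colorings
  invariant under one reflection or under the whole group, each being \<open>k\<close> to the power of
  the number of orbits: \<open>n\<lceil>m/2\<rceil>\<close>, \<open>m\<lceil>n/2\<rceil>\<close>, \<open>\<lceil>mn/2\<rceil>\<close> and \<open>\<lceil>m/2\<rceil>\<lceil>n/2\<rceil>\<close>.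
\<close>

section \<open>Automorphisms and equivalence of colorings\<close>

lemma automorphism_in:
  "is_automorphism V E f \<Longrightarrow> v \<in> V \<Longrightarrow> f v \<in> V"
  unfolding is_automorphism_def by (auto simp: bij_betw_apply)

lemma automorphism_inv_into_in:
  "is_automorphism V E f \<Longrightarrow> v \<in> V \<Longrightarrow> inv_into V f v \<in> V"
  unfolding is_automorphism_def by (metis bij_betw_apply bij_betw_inv_into)

lemma automorphism_f_inv_into_f [simp]:
  "is_automorphism V E f \<Longrightarrow> v \<in> V \<Longrightarrow> f (inv_into V f v) = v"
  unfolding is_automorphism_def by (simp add: bij_betw_def f_inv_into_f)

lemma automorphism_inv_into_f_f [simp]:
  "is_automorphism V E f \<Longrightarrow> v \<in> V \<Longrightarrow> inv_into V f (f v) = v"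
  unfolding is_automorphism_def by (simp add: bij_betw_def)

lemma is_automorphism_id: "is_automorphism V E id"
  unfolding is_automorphism_def by auto

lemma is_automorphism_comp:
  assumes "is_automorphism V E f" "is_automorphism V E g"
  shows "is_automorphism V E (g \<circ> f)"
  using assms automorphism_in[OF assms(1)]
  unfolding is_automorphism_def by (auto intro: bij_betw_trans)

lemma is_automorphism_inv_into:
  assumes f: "is_automorphism V E f"
  shows "is_automorphism V E (inv_into V f)"
proof -
  have "E u v \<longleftrightarrow> E (inv_into V f u) (inv_into V f v)" if "u \<in> V" "v \<in> V" for u v
    using f that automorphism_inv_into_in[OF f] unfolding is_automorphism_def
    by (metis automorphism_f_inv_into_f[OF f])
  with f show ?thesis unfolding is_automorphism_def by (auto intro: bij_betw_inv_into)
qed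

lemma equiv_equivalent_colorings: "equiv (colorings V k) (equivalent_colorings V E k)"
proof (rule equivI)
  show "equivalent_colorings V E k \<subseteq> colorings V k \<times> colorings V k"
    unfolding equivalent_colorings_def by auto
  show "refl_on (colorings V k) (equivalent_colorings V E k)"
    unfolding refl_on_def equivalent_colorings_def by (auto intro!: exI[of _ id] is_automorphism_id)
  show "sym (equivalent_colorings V E k)"
  proof (rule symI)
    fix c1 c2 assume "(c1, c2) \<in> equivalent_colorings V E k"
    then obtain \<alpha> where \<alpha>: "is_automorphism V E \<alpha>" "\<forall>v\<in>V. c1 v = c2 (\<alpha> v)"
      and c: "c1 \<in> colorings V k" "c2 \<in> colorings V k"
      unfolding equivalent_colorings_def by auto
    have "\<forall>v\<in>V. c2 v = c1 (inv_into V \<alpha> v)"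
      using \<alpha> automorphism_inv_into_in[OF \<alpha>(1)] by simp
    with c is_automorphism_inv_into[OF \<alpha>(1)] show "(c2, c1) \<in> equivalent_colorings V E k"
      unfolding equivalent_colorings_def by auto
  qed
  show "trans (equivalent_colorings V E k)"
  proof (rule transI)
    fix c1 c2 c3
    assume "(c1, c2) \<in> equivalent_colorings V E k" "(c2, c3) \<in> equivalent_colorings V E k"
    then obtain \<alpha> \<beta> where \<alpha>: "is_automorphism V E \<alpha>" "\<forall>v\<in>V. c1 v = c2 (\<alpha> v)"
      and \<beta>: "is_automorphism V E \<beta>" "\<forall>v\<in>V. c2 v = c3 (\<beta> v)"
      and c: "c1 \<in> colorings V k" "c3 \<in> colorings V k"
      unfolding equivalent_colorings_def by auto
    have "\<forall>v\<in>V. c1 v = c3 ((\<beta> \<circ> \<alpha>) v)"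
      using \<alpha> \<beta> automorphism_in[OF \<alpha>(1)] by simp
    with c is_automorphism_comp[OF \<alpha>(1) \<beta>(1)] show "(c1, c3) \<in> equivalent_colorings V E k"
      unfolding equivalent_colorings_def by auto
  qed
qed

text \<open>Automorphisms are identified when they agree on \<open>V\<close>.\<close>

definition automorphisms :: "'a set \<Rightarrow> ('a \<Rightarrow> 'a \<Rightarrow> bool) \<Rightarrow> ('a \<Rightarrow> 'a) set" where
  "automorphisms V E = (\<lambda>f. restrict f V) ` {f. is_automorphism V E f}"

lemma distinguishing_equivalent:
  assumes c: "distinguishing V E c" and equiv: "(c, c') \<in> equivalent_colorings V E k"
  shows "distinguishing V E c'"
  unfolding distinguishing_def
proof (intro allI impI ballI, elim conjE)
  obtain \<alpha> where \<alpha>: "is_automorphism V E \<alpha>" and c_c': "\<And>v. v \<in> V \<Longrightarrow> c v = c' (\<alpha> v)"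
    using equiv unfolding equivalent_colorings_def by auto
  fix f w assume f: "is_automorphism V E f" and f_fixes: "\<forall>v\<in>V. c' (f v) = c' v" and w: "w \<in> V"
  let ?h = "inv_into V \<alpha> \<circ> f \<circ> \<alpha>"
  have h: "is_automorphism V E ?h"
    using f \<alpha> by (intro is_automorphism_comp is_automorphism_inv_into)
  have "c (?h v) = c v" if v: "v \<in> V" for v
  proof -
    have fv: "f (\<alpha> v) \<in> V" using automorphism_in[OF f] automorphism_in[OF \<alpha> v] .
    have "c (?h v) = c' (\<alpha> (inv_into V \<alpha> (f (\<alpha> v))))"
      using c_c' automorphism_inv_into_in[OF \<alpha> fv] by simp
    also have "\<dots> = c' (f (\<alpha> v))" using \<alpha> fv by simp
    also have "\<dots> = c' (\<alpha> v)" using f_fixes automorphism_in[OF \<alpha> v] by blast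
    also have "\<dots> = c v" using c_c'[OF v] by simp
    finally show ?thesis .
  qed
  with c h have h_id: "?h v = v" if "v \<in> V" for v
    using that unfolding distinguishing_def by blast
  have "f w = \<alpha> (?h (inv_into V \<alpha> w))"
    using \<alpha> w automorphism_inv_into_in[OF \<alpha> w] automorphism_in[OF f] by simp
  also have "\<dots> = w" using h_id[OF automorphism_inv_into_in[OF \<alpha> w]] \<alpha> w by simp
  finally show "f w = w" .
qed

lemma distinguishing_imp_restrict_automorphisms_eq:
  assumes \<beta>: "is_automorphism V E \<beta>" and \<gamma>: "is_automorphism V E \<gamma>"
    and c: "distinguishing V E c" and agree: "\<forall>v\<in>V. c (\<beta> v) = c (\<gamma> v)"
  shows "restrict \<beta> V = restrict \<gamma> V"
proof -
  let ?h = "\<beta> \<circ> inv_into V \<gamma>"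
  have h: "is_automorphism V E ?h"
    using \<beta> \<gamma> by (intro is_automorphism_comp is_automorphism_inv_into)
  have "c (?h w) = c w" if "w \<in> V" for w
    using that agree automorphism_inv_into_in[OF \<gamma>] \<gamma> by fastforce
  with c h have "?h w = w" if "w \<in> V" for w
    using that unfolding distinguishing_def by blast
  show ?thesis
  proof (rule restrict_ext)
    fix v assume "v \<in> V"
    then have "?h (\<gamma> v) = \<gamma> v" using \<open>\<And>w. w \<in> V \<Longrightarrow> ?h w = w\<close> automorphism_in[OF \<gamma>] by blast
    with \<gamma> \<open>v \<in> V\<close> show "\<beta> v = \<gamma> v" by simp
  qed
qed

lemma bij_betw_automorphisms_equivalence_class:
  assumes c: "c \<in> colorings V k" "distinguishing V E c"
  shows "bij_betw (\<lambda>f. restrict (c \<circ> f) V) (automorphisms V E) (equivalent_colorings V E k `` {c})"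
  unfolding bij_betw_def
proof
  show "inj_on (\<lambda>f. restrict (c \<circ> f) V) (automorphisms V E)"
  proof (rule inj_onI)
    fix f g assume "f \<in> automorphisms V E" "g \<in> automorphisms V E"
      and fg: "restrict (c \<circ> f) V = restrict (c \<circ> g) V"
    then obtain \<beta> \<gamma> where \<beta>: "is_automorphism V E \<beta>" "f = restrict \<beta> V"
      and \<gamma>: "is_automorphism V E \<gamma>" "g = restrict \<gamma> V"
      unfolding automorphisms_def by blast
    from fg have "\<forall>v\<in>V. c (\<beta> v) = c (\<gamma> v)"
      unfolding \<beta>(2) \<gamma>(2) by (metis comp_apply restrict_apply')
    then show "f = g"
      using distinguishing_imp_restrict_automorphisms_eq[OF \<beta>(1) \<gamma>(1) c(2)] \<beta>(2) \<gamma>(2) by blast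
  qed
  show "(\<lambda>f. restrict (c \<circ> f) V) ` automorphisms V E = equivalent_colorings V E k `` {c}"
  proof (intro equalityI subsetI)
    fix c' assume "c' \<in> (\<lambda>f. restrict (c \<circ> f) V) ` automorphisms V E"
    then obtain \<beta> where \<beta>: "is_automorphism V E \<beta>" and c': "c' = restrict (c \<circ> restrict \<beta> V) V"
      unfolding automorphisms_def by blast
    have "\<forall>v\<in>V. c v = c' (inv_into V \<beta> v)"
      using \<beta> c' automorphism_inv_into_in by fastforce
    moreover have "c' \<in> colorings V k"
      using c(1) \<beta> c' automorphism_in unfolding colorings_def by fastforce
    ultimately show "c' \<in> equivalent_colorings V E k `` {c}"
      using c(1) \<beta> is_automorphism_inv_into unfolding equivalent_colorings_def by blast
  next
    fix c' assume "c' \<in> equivalent_colorings V E k `` {c}"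
    then obtain \<alpha> where \<alpha>: "is_automorphism V E \<alpha>" "\<forall>v\<in>V. c v = c' (\<alpha> v)"
      and c': "c' \<in> colorings V k"
      unfolding equivalent_colorings_def by auto
    have "c' = restrict (c \<circ> restrict (inv_into V \<alpha>) V) V"
    proof
      fix w show "c' w = restrict (c \<circ> restrict (inv_into V \<alpha>) V) V w"
        using \<alpha> c' automorphism_inv_into_in[OF \<alpha>(1)] PiE_arb[of c' V]
        unfolding colorings_def by (cases "w \<in> V") auto
    qed
    then show "c' \<in> (\<lambda>f. restrict (c \<circ> f) V) ` automorphisms V E"
      using is_automorphism_inv_into[OF \<alpha>(1)] unfolding automorphisms_def by blast
  qed
qed

lemma card_distinguishing_colorings:
  assumes "finite V"
  shows "card {c \<in> colorings V k. distinguishing V E c} = card (automorphisms V E) * Phi k V E"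
proof -
  let ?D = "{c \<in> colorings V k. distinguishing V E c}"
  let ?R = "equivalent_colorings V E k"
  have eqv: "equiv (colorings V k) ?R" by (rule equiv_equivalent_colorings)
  have quotient: "?D // ?R = (\<lambda>c. ?R `` {c}) ` ?D"
    unfolding quotient_def by blast
  have finite_D: "finite ?D"
    using assms unfolding colorings_def by (simp add: finite_PiE)
  have class_in_D: "?R `` {c} \<subseteq> ?D" if "c \<in> ?D" for c
  proof
    fix c' assume "c' \<in> ?R `` {c}"
    then have "(c, c') \<in> ?R" by simp
    with that distinguishing_equivalent[of V E c c' k] show "c' \<in> ?D"
      unfolding equivalent_colorings_def by simp
  qed
  have union: "\<Union> (?D // ?R) = ?D"
  proof
    show "\<Union> (?D // ?R) \<subseteq> ?D" using class_in_D unfolding quotient by blast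
    show "?D \<subseteq> \<Union> (?D // ?R)"
      using eqv unfolding quotient equiv_def refl_on_def by blast
  qed
  have "card (automorphisms V E) * card (?D // ?R) = card (\<Union> (?D // ?R))"
  proof (rule card_partition)
    show "finite (?D // ?R)" unfolding quotient using finite_D by (rule finite_imageI)
    show "finite (\<Union> (?D // ?R))" using finite_D union by simp
    show "card X = card (automorphisms V E)" if X: "X \<in> ?D // ?R" for X
    proof -
      obtain c where "c \<in> colorings V k" "distinguishing V E c" "X = ?R `` {c}"
        using X unfolding quotient by blast
      then show ?thesis
        using bij_betw_same_card[OF bij_betw_automorphisms_equivalence_class] by metis
    qed
    show "X \<inter> Y = {}" if "X \<in> ?D // ?R" "Y \<in> ?D // ?R" "X \<noteq> Y" for X Y
    proof -
      have "?D // ?R \<subseteq> colorings V k // ?R" unfolding quotient_def by blast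
      with that show ?thesis using quotient_disj[OF eqv] by blast
    qed
  qed
  with union show ?thesis unfolding Phi_def by simp
qed

section \<open>Counting invariant colorings\<close>

lemma card_colorings: "finite V \<Longrightarrow> card (colorings V k) = k ^ card V"
  unfolding colorings_def by (simp add: card_PiE)

lemma card_colorings_constant_on_retraction_fibres:
  assumes "finite V" and r: "r ` V \<subseteq> V" "\<forall>v\<in>V. r (r v) = r v"
  shows "card {c \<in> colorings V k. \<forall>v\<in>V. c v = c (r v)} = k ^ card (r ` V)"
proof -
  let ?S = "{c \<in> colorings V k. \<forall>v\<in>V. c v = c (r v)}"
  have "bij_betw (\<lambda>c. restrict c (r ` V)) ?S (r ` V \<rightarrow>\<^sub>E {1..k})"
  proof (rule bij_betwI[where g = "\<lambda>d. \<lambda>v\<in>V. d (r v)"])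
    show "(\<lambda>c. restrict c (r ` V)) \<in> ?S \<rightarrow> r ` V \<rightarrow>\<^sub>E {1..k}"
      using r unfolding colorings_def by (auto simp: PiE_iff)
    show "(\<lambda>d. \<lambda>v\<in>V. d (r v)) \<in> (r ` V \<rightarrow>\<^sub>E {1..k}) \<rightarrow> ?S"
      using r unfolding colorings_def by (auto simp: PiE_iff)
    show "(\<lambda>v\<in>V. restrict c (r ` V) (r v)) = c" if "c \<in> ?S" for c
    proof
      fix v show "(\<lambda>v\<in>V. restrict c (r ` V) (r v)) v = c v"
        using that unfolding colorings_def by (cases "v \<in> V") (auto simp: PiE_iff extensional_def)
    qed
    show "restrict (\<lambda>v\<in>V. d (r v)) (r ` V) = d" if "d \<in> r ` V \<rightarrow>\<^sub>E {1..k}" for d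
    proof
      fix v show "restrict (\<lambda>v\<in>V. d (r v)) (r ` V) v = d v"
        using that r by (cases "v \<in> r ` V") (auto simp: PiE_iff extensional_def)
    qed
  qed
  then show ?thesis
    using assms by (simp add: bij_betw_same_card card_PiE)
qed

definition invariant_colorings :: "'a set \<Rightarrow> nat \<Rightarrow> ('a \<Rightarrow> 'a) set \<Rightarrow> ('a \<Rightarrow> nat) set" where
  "invariant_colorings V k G = {c \<in> colorings V k. \<forall>g\<in>G. \<forall>v\<in>V. c (g v) = c v}"

text \<open>The map \<open>r\<close> picks a representative of every orbit of \<open>G\<close>, so the
  \<open>G\<close>-invariant colorings are those constant on the fibres of \<open>r\<close>.\<close>

lemma card_invariant_colorings:
  assumes "finite V" and G: "\<forall>g\<in>G. g ` V \<subseteq> V"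
    and r: "\<forall>v\<in>V. r v = v \<or> (\<exists>g\<in>G. r v = g v)" "\<forall>g\<in>G. \<forall>v\<in>V. r (g v) = r v"
  shows "card (invariant_colorings V k G) = k ^ card (r ` V)"
proof -
  have invariant_iff: "(\<forall>g\<in>G. \<forall>v\<in>V. c (g v) = c v) \<longleftrightarrow> (\<forall>v\<in>V. c v = c (r v))" for c
  proof
    assume "\<forall>g\<in>G. \<forall>v\<in>V. c (g v) = c v"
    with r(1) show "\<forall>v\<in>V. c v = c (r v)" by metis
  next
    assume "\<forall>v\<in>V. c v = c (r v)"
    with G r(2) show "\<forall>g\<in>G. \<forall>v\<in>V. c (g v) = c v" by (metis image_subset_iff)
  qed
  have "r ` V \<subseteq> V" "\<forall>v\<in>V. r (r v) = r v"
    using G r by (fastforce, metis)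
  then have "card {c \<in> colorings V k. \<forall>v\<in>V. c v = c (r v)} = k ^ card (r ` V)"
    by (intro card_colorings_constant_on_retraction_fibres[OF assms(1)])
  then show ?thesis
    unfolding invariant_colorings_def invariant_iff .
qed

lemma card_Un3_pairwise_Int_eq:
  assumes "finite X" "finite Y" "finite Z" "X \<inter> Y = B" "X \<inter> Z = B" "Y \<inter> Z = B"
  shows "card (X \<union> Y \<union> Z) + 2 * card B = card X + card Y + card Z"
proof -
  have "(X \<union> Y) \<inter> Z = B" using assms by blast
  then have "card (X \<union> Y) + card Z = card (X \<union> Y \<union> Z) + card B"
    using card_Un_Int[of "X \<union> Y" Z] assms by simp
  moreover have "card X + card Y = card (X \<union> Y) + card B"
    using card_Un_Int[of X Y] assms by simp
  ultimately show ?thesis by simp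
qed

section \<open>Walks and the Manhattan distance on the grid\<close>

inductive reachable_within :: "'a set \<Rightarrow> ('a \<Rightarrow> 'a \<Rightarrow> bool) \<Rightarrow> nat \<Rightarrow> 'a \<Rightarrow> 'a \<Rightarrow> bool"
  for V E where
  refl: "u \<in> V \<Longrightarrow> reachable_within V E 0 u u"
| step: "reachable_within V E t u w \<Longrightarrow> v \<in> V \<Longrightarrow> E w v \<Longrightarrow> reachable_within V E (Suc t) u v"
| mono: "reachable_within V E t u v \<Longrightarrow> reachable_within V E (Suc t) u v"

lemma reachable_within_in: "reachable_within V E t u v \<Longrightarrow> u \<in> V \<and> v \<in> V"
  by (induction rule: reachable_within.induct) auto

lemma reachable_within_automorphism:
  assumes f: "is_automorphism V E f"
  shows "reachable_within V E t u v \<Longrightarrow> reachable_within V E t (f u) (f v)"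
proof (induction rule: reachable_within.induct)
  case (refl u)
  then show ?case using automorphism_in[OF f] by (blast intro: reachable_within.refl)
next
  case (step t u w v)
  have "w \<in> V" using step.hyps(1) reachable_within_in by fast
  with step f have "E (f w) (f v)" unfolding is_automorphism_def by blast
  with step automorphism_in[OF f] show ?case by (blast intro: reachable_within.step)
next
  case (mono t u v)
  from mono.IH show ?case by (rule reachable_within.mono)
qed

lemma reachable_within_automorphism_iff:
  assumes f: "is_automorphism V E f" and "u \<in> V" "v \<in> V"
  shows "reachable_within V E t (f u) (f v) \<longleftrightarrow> reachable_within V E t u v"
  using reachable_within_automorphism[OF is_automorphism_inv_into[OF f], of t "f u" "f v"]
    reachable_within_automorphism[OF f] assms by auto

abbreviation grid_V :: "nat \<Rightarrow> nat \<Rightarrow> (nat \<times> nat) set" where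
  "grid_V m n \<equiv> cart_V (path_V m) (path_V n)"

abbreviation grid_E :: "nat \<times> nat \<Rightarrow> nat \<times> nat \<Rightarrow> bool" where
  "grid_E \<equiv> cart_E path_E path_E"

lemma grid_V_eq: "grid_V m n = {0..<m} \<times> {0..<n}"
  unfolding cart_V_def path_V_def ..

definition manhattan :: "nat \<times> nat \<Rightarrow> nat \<times> nat \<Rightarrow> int" where
  "manhattan u v = \<bar>int (fst u) - int (fst v)\<bar> + \<bar>int (snd u) - int (snd v)\<bar>"

lemma manhattan_nonneg: "manhattan u v \<ge> 0"
  unfolding manhattan_def by simp

lemma grid_step_towards:
  assumes "u \<in> grid_V m n" "v \<in> grid_V m n" "u \<noteq> v"
  shows "\<exists>w \<in> grid_V m n. grid_E w v \<and> manhattan u w = manhattan u v - 1"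
proof -
  obtain x y a b where u: "u = (x, y)" and v: "v = (a, b)" by fastforce
  define w where "w = (if a < x then (a + 1, b) else if x < a then (a - 1, b)
                       else if b < y then (a, b + 1) else (a, b - 1))"
  have "w \<in> grid_V m n \<and> grid_E w v \<and> manhattan u w = manhattan u v - 1"
    using assms unfolding u v w_def grid_V_eq manhattan_def cart_E_def path_E_def by auto
  then show ?thesis by blast
qed

lemma reachable_within_grid_iff:
  assumes "u \<in> grid_V m n" "v \<in> grid_V m n"
  shows "reachable_within (grid_V m n) grid_E t u v \<longleftrightarrow> manhattan u v \<le> int t"
proof
  show "reachable_within (grid_V m n) grid_E t u v \<Longrightarrow> manhattan u v \<le> int t"
    by (induction rule: reachable_within.induct)
      (auto simp: manhattan_def cart_E_def path_E_def)
  show "manhattan u v \<le> int t \<Longrightarrow> reachable_within (grid_V m n) grid_E t u v"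
    using assms(2)
  proof (induction t arbitrary: v)
    case 0
    then have "u = v" unfolding manhattan_def by (auto simp: prod_eq_iff)
    with 0 show ?case by (auto intro: reachable_within.refl)
  next
    case (Suc t)
    show ?case
    proof (cases "manhattan u v \<le> int t")
      case True
      with Suc show ?thesis by (blast intro: reachable_within.mono)
    next
      case False
      then have "u \<noteq> v" unfolding manhattan_def by auto
      with assms(1) Suc.prems(2) obtain w where
        w: "w \<in> grid_V m n" "grid_E w v" "manhattan u w = manhattan u v - 1"
        using grid_step_towards by blast
      with Suc.prems have "reachable_within (grid_V m n) grid_E t u w"
        by (intro Suc.IH) auto
      with w Suc.prems show ?thesis by (blast intro: reachable_within.step)
    qed
  qed
qed

lemma manhattan_grid_automorphism:
  assumes f: "is_automorphism (grid_V m n) grid_E f" and uv: "u \<in> grid_V m n" "v \<in> grid_V m n"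
  shows "manhattan (f u) (f v) = manhattan u v"
proof -
  have "manhattan (f u) (f v) \<le> int t \<longleftrightarrow> manhattan u v \<le> int t" for t
  proof -
    have "manhattan (f u) (f v) \<le> int t \<longleftrightarrow> reachable_within (grid_V m n) grid_E t (f u) (f v)"
      using reachable_within_grid_iff automorphism_in[OF f] uv by simp
    also have "\<dots> \<longleftrightarrow> manhattan u v \<le> int t"
      using reachable_within_automorphism_iff[OF f uv] reachable_within_grid_iff[OF uv] by simp
    finally show ?thesis .
  qed
  from this[of "nat (manhattan u v)"] this[of "nat (manhattan (f u) (f v))"]
  show ?thesis using manhattan_nonneg[of u v] manhattan_nonneg[of "f u" "f v"] by simp
qed

section \<open>The automorphisms of the grid\<close>

definition grid_reflection :: "nat \<Rightarrow> nat \<Rightarrow> bool \<Rightarrow> bool \<Rightarrow> nat \<times> nat \<Rightarrow> nat \<times> nat" where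
  "grid_reflection m n s t v = (if s then m - 1 - fst v else fst v, if t then n - 1 - snd v else snd v)"

lemma grid_reflection_False_False [simp]: "grid_reflection m n False False v = v"
  unfolding grid_reflection_def by simp

lemma grid_reflection_in: "v \<in> grid_V m n \<Longrightarrow> grid_reflection m n s t v \<in> grid_V m n"
  unfolding grid_reflection_def grid_V_eq by auto

lemma grid_reflection_comp:
  "v \<in> grid_V m n \<Longrightarrow>
    grid_reflection m n s t (grid_reflection m n s' t' v) = grid_reflection m n (s \<noteq> s') (t \<noteq> t') v"
  unfolding grid_reflection_def grid_V_eq by (auto simp: prod_eq_iff)

lemma grid_reflection_involution [simp]:
  "v \<in> grid_V m n \<Longrightarrow> grid_reflection m n s t (grid_reflection m n s t v) = v"
  by (simp add: grid_reflection_comp)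

lemma is_automorphism_grid_reflection: "is_automorphism (grid_V m n) grid_E (grid_reflection m n s t)"
proof -
  have flip_path_E: "path_E (if s then m - 1 - i else i) (if s then m - 1 - i' else i') \<longleftrightarrow> path_E i i'"
    and flip_eq: "(if s then m - 1 - i else i) = (if s then m - 1 - i' else i') \<longleftrightarrow> i = i'"
    if "i < m" "i' < m" for s m i i'
    using that by (cases s; auto simp: path_E_def)+
  have "bij_betw (grid_reflection m n s t) (grid_V m n) (grid_V m n)"
    by (rule bij_betwI[where g = "grid_reflection m n s t"]) (auto simp: grid_reflection_in)
  moreover have "grid_E u v \<longleftrightarrow> grid_E (grid_reflection m n s t u) (grid_reflection m n s t v)"
    if "u \<in> grid_V m n" "v \<in> grid_V m n" for u v
    using that flip_path_E flip_eq unfolding grid_reflection_def grid_V_eq cart_E_def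
    by (simp add: mem_Times_iff)
  ultimately show ?thesis unfolding is_automorphism_def by blast
qed

lemma grid_corner_eq_iff:
  assumes "m \<ge> 2" "n \<ge> 2"
  shows "grid_reflection m n s t (0, 0) = grid_reflection m n s' t' (0, 0) \<longleftrightarrow> s = s' \<and> t = t'"
  using assms unfolding grid_reflection_def by auto

text \<open>Corners of the grid are written as images of the origin under the reflections.\<close>

lemma manhattan_diametral:
  assumes "v \<in> grid_V m n" "w \<in> grid_V m n" "manhattan v w = int (m - 1) + int (n - 1)"
  obtains s t where "v = grid_reflection m n s t (0, 0)" "w = grid_reflection m n (\<not> s) (\<not> t) (0, 0)"
proof -
  obtain a b a' b' where v: "v = (a, b)" and w: "w = (a', b')" by fastforce
  have "(a = 0 \<and> a' = m - 1 \<or> a = m - 1 \<and> a' = 0) \<and> (b = 0 \<and> b' = n - 1 \<or> b = n - 1 \<and> b' = 0)"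
    using assms unfolding v w grid_V_eq manhattan_def by auto
  then show ?thesis
    using that[of "a \<noteq> 0" "b \<noteq> 0"] unfolding v w grid_reflection_def by auto
qed

lemma manhattan_corners_determine:
  assumes "v \<in> grid_V m n" "w \<in> grid_V m n"
    and "manhattan v (0, 0) = manhattan w (0, 0)"
    and "manhattan v (m - 1, 0) = manhattan w (m - 1, 0)"
    and "manhattan v (0, n - 1) = manhattan w (0, n - 1)"
  shows "v = w"
  using assms unfolding grid_V_eq manhattan_def by (auto simp: prod_eq_iff)

lemma grid_corner_in: "0 < m \<Longrightarrow> 0 < n \<Longrightarrow> grid_reflection m n s t (0, 0) \<in> grid_V m n"
  by (intro grid_reflection_in) (simp add: grid_V_eq)

lemma grid_automorphism_corner:
  assumes "0 < m" "0 < n" and g: "is_automorphism (grid_V m n) grid_E g"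
  obtains s' t' where "g (grid_reflection m n s t (0, 0)) = grid_reflection m n s' t' (0, 0)"
proof -
  let ?c = "\<lambda>s t. grid_reflection m n s t (0, 0)"
  have corner: "?c s t \<in> grid_V m n" for s t using assms(1,2) by (rule grid_corner_in)
  have "manhattan (?c s t) (?c (\<not> s) (\<not> t)) = int (m - 1) + int (n - 1)"
    unfolding grid_reflection_def manhattan_def by auto
  then have "manhattan (g (?c s t)) (g (?c (\<not> s) (\<not> t))) = int (m - 1) + int (n - 1)"
    using manhattan_grid_automorphism[OF g corner corner] by simp
  then obtain s' t' where "g (?c s t) = ?c s' t'"
    using manhattan_diametral[OF automorphism_in[OF g corner] automorphism_in[OF g corner]] by blast
  then show ?thesis by (rule that)
qed

lemma grid_automorphism_fixing_corners:
  assumes g: "is_automorphism (grid_V m n) grid_E g"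
    and fixed: "g (0, 0) = (0, 0)" "g (m - 1, 0) = (m - 1, 0)" "g (0, n - 1) = (0, n - 1)"
    and v: "v \<in> grid_V m n"
  shows "g v = v"
proof (rule manhattan_corners_determine[OF automorphism_in[OF g v] v])
  have corners: "(0, 0) \<in> grid_V m n" "(m - 1, 0) \<in> grid_V m n" "(0, n - 1) \<in> grid_V m n"
    using v by (auto simp: grid_V_eq)
  show "manhattan (g v) (0, 0) = manhattan v (0, 0)"
    using manhattan_grid_automorphism[OF g v corners(1)] fixed(1) by simp
  show "manhattan (g v) (m - 1, 0) = manhattan v (m - 1, 0)"
    using manhattan_grid_automorphism[OF g v corners(2)] fixed(2) by simp
  show "manhattan (g v) (0, n - 1) = manhattan v (0, n - 1)"
    using manhattan_grid_automorphism[OF g v corners(3)] fixed(3) by simp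
qed

lemma grid_automorphism_is_reflection:
  assumes mn: "m \<ge> 2" "n \<ge> 2" "m \<noteq> n" and f: "is_automorphism (grid_V m n) grid_E f"
  obtains s t where "\<forall>v\<in>grid_V m n. f v = grid_reflection m n s t v"
proof -
  let ?c = "\<lambda>s t. grid_reflection m n s t (0, 0)"
  have pos: "0 < m" "0 < n" using mn by auto
  have corner: "?c s t \<in> grid_V m n" for s t using pos by (rule grid_corner_in)
  obtain s t where "f (?c False False) = ?c s t"
    using grid_automorphism_corner[OF pos f] .
  define h where "h = grid_reflection m n s t \<circ> f"
  have h: "is_automorphism (grid_V m n) grid_E h"
    unfolding h_def using f is_automorphism_grid_reflection by (rule is_automorphism_comp)
  have h_origin: "h (0, 0) = (0, 0)"
    unfolding h_def using \<open>f (?c False False) = ?c s t\<close> corner[of False False] by simp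
  txt \<open>\<open>h\<close> then also fixes \<open>(m - 1, 0)\<close> and \<open>(0, n - 1)\<close>: as \<open>m \<noteq> n\<close>, these are the
    only corners at distance \<open>m - 1\<close> resp. \<open>n - 1\<close> from the origin.\<close>
  have h_corner: "h (?c s' t') = ?c s' t'" if "s' \<noteq> t'" for s' t'
  proof -
    obtain s'' t'' where h_st: "h (?c s' t') = ?c s'' t''"
      using grid_automorphism_corner[OF pos h] .
    have "manhattan (?c s'' t'') (0, 0) = manhattan (?c s' t') (0, 0)"
      using manhattan_grid_automorphism[OF h corner[of s' t'] corner[of False False]] h_origin h_st
      by simp
    with mn that have "s'' = s' \<and> t'' = t'"
      unfolding grid_reflection_def manhattan_def by (auto split: if_splits)
    with h_st show ?thesis by simp
  qed
  have "h v = v" if "v \<in> grid_V m n" for v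
    using grid_automorphism_fixing_corners[OF h h_origin _ _ that]
      h_corner[of True False] h_corner[of False True] by (simp add: grid_reflection_def)
  then have "f v = grid_reflection m n s t v" if "v \<in> grid_V m n" for v
    using that automorphism_in[OF f] unfolding h_def by (metis comp_apply grid_reflection_involution)
  then show ?thesis using that by blast
qed

lemma automorphisms_grid:
  assumes "m \<ge> 2" "n \<ge> 2" "m \<noteq> n"
  shows "automorphisms (grid_V m n) grid_E = (\<lambda>(s, t). restrict (grid_reflection m n s t) (grid_V m n)) ` UNIV"
proof (intro equalityI subsetI)
  fix f assume "f \<in> automorphisms (grid_V m n) grid_E"
  then obtain g where g: "is_automorphism (grid_V m n) grid_E g" "f = restrict g (grid_V m n)"
    unfolding automorphisms_def by blast
  obtain s t where "\<forall>v\<in>grid_V m n. g v = grid_reflection m n s t v"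
    using grid_automorphism_is_reflection[OF assms g(1)] .
  then have "f = restrict (grid_reflection m n s t) (grid_V m n)"
    unfolding g(2) by (intro restrict_ext) simp
  then show "f \<in> (\<lambda>(s, t). restrict (grid_reflection m n s t) (grid_V m n)) ` UNIV"
    by (auto intro: image_eqI[of _ _ "(s, t)"])
qed (auto simp: automorphisms_def intro: is_automorphism_grid_reflection)

lemma card_automorphisms_grid:
  assumes "m \<ge> 2" "n \<ge> 2" "m \<noteq> n"
  shows "card (automorphisms (grid_V m n) grid_E) = 4"
proof -
  have origin: "(0, 0) \<in> grid_V m n" using assms by (simp add: grid_V_eq)
  have "inj (\<lambda>(s, t). restrict (grid_reflection m n s t) (grid_V m n))"
  proof (rule injI, clarify)
    fix s t s' t'
    assume "restrict (grid_reflection m n s t) (grid_V m n) = restrict (grid_reflection m n s' t') (grid_V m n)"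
    from fun_cong[OF this, of "(0, 0)"] origin show "s = s' \<and> t = t'"
      using grid_corner_eq_iff[OF assms(1,2)] by simp
  qed
  moreover have "card (UNIV :: (bool \<times> bool) set) = 4"
    by (simp add: card_cartesian_product flip: UNIV_Times_UNIV)
  ultimately show ?thesis
    unfolding automorphisms_grid[OF assms] by (simp add: card_image)
qed

lemma distinguishing_grid_iff:
  assumes mn: "m \<ge> 2" "n \<ge> 2" "m \<noteq> n"
  shows "distinguishing (grid_V m n) grid_E c \<longleftrightarrow>
    \<not> (\<exists>s t. (s \<or> t) \<and> (\<forall>v\<in>grid_V m n. c (grid_reflection m n s t v) = c v))"
proof
  assume c: "distinguishing (grid_V m n) grid_E c"
  show "\<not> (\<exists>s t. (s \<or> t) \<and> (\<forall>v\<in>grid_V m n. c (grid_reflection m n s t v) = c v))"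
  proof (intro notI, elim exE conjE)
    fix s t assume "s \<or> t" "\<forall>v\<in>grid_V m n. c (grid_reflection m n s t v) = c v"
    moreover have "(0, 0) \<in> grid_V m n" using mn by (simp add: grid_V_eq)
    ultimately have "grid_reflection m n s t (0, 0) = (0, 0)"
      using c is_automorphism_grid_reflection unfolding distinguishing_def by blast
    with \<open>s \<or> t\<close> show False using grid_corner_eq_iff[OF mn(1,2), of s t False False] by simp
  qed
next
  assume no_reflection: "\<not> (\<exists>s t. (s \<or> t) \<and> (\<forall>v\<in>grid_V m n. c (grid_reflection m n s t v) = c v))"
  show "distinguishing (grid_V m n) grid_E c"
    unfolding distinguishing_def
  proof (intro allI impI, elim conjE)
    fix f assume f: "is_automorphism (grid_V m n) grid_E f" "\<forall>v\<in>grid_V m n. c (f v) = c v"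
    obtain s t where st: "\<forall>v\<in>grid_V m n. f v = grid_reflection m n s t v"
      using grid_automorphism_is_reflection[OF mn f(1)] .
    with f(2) have "\<forall>v\<in>grid_V m n. c (grid_reflection m n s t v) = c v" by simp
    with no_reflection have "\<not> s \<and> \<not> t" by blast
    with st show "\<forall>v\<in>grid_V m n. f v = v" by simp
  qed
qed

lemma distinguishing_grid_colorings:
  assumes "m \<ge> 2" "n \<ge> 2" "m \<noteq> n"
  shows "{c \<in> colorings (grid_V m n) k. distinguishing (grid_V m n) grid_E c} =
    colorings (grid_V m n) k -
      (invariant_colorings (grid_V m n) k {grid_reflection m n True False} \<union>
       invariant_colorings (grid_V m n) k {grid_reflection m n False True} \<union>
       invariant_colorings (grid_V m n) k {grid_reflection m n True True})"
  unfolding invariant_colorings_def distinguishing_grid_iff[OF assms] by (auto simp: ex_bool_eq)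

section \<open>Colorings invariant under reflections\<close>

text \<open>The group generated by the reflection in the first coordinate (if \<open>s\<close>) and the one in
  the second coordinate (if \<open>t\<close>).\<close>

definition axis_reflections :: "nat \<Rightarrow> nat \<Rightarrow> bool \<Rightarrow> bool \<Rightarrow> (nat \<times> nat \<Rightarrow> nat \<times> nat) set" where
  "axis_reflections m n s t = (\<lambda>(a, b). grid_reflection m n (s \<and> a) (t \<and> b)) ` UNIV"

lemma ball_axis_reflections:
  "(\<forall>g\<in>axis_reflections m n s t. P g) \<longleftrightarrow> (\<forall>a b. P (grid_reflection m n (s \<and> a) (t \<and> b)))"
  unfolding axis_reflections_def by auto

lemma invariant_colorings_axis_reflections:
  assumes "\<not> (s \<and> t)"
  shows "invariant_colorings (grid_V m n) k (axis_reflections m n s t) =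
    invariant_colorings (grid_V m n) k {grid_reflection m n s t}"
proof -
  have single: "(\<forall>a b. \<forall>v\<in>grid_V m n. c (grid_reflection m n (s \<and> a) (t \<and> b) v) = c v) \<longleftrightarrow>
      (\<forall>v\<in>grid_V m n. c (grid_reflection m n s t v) = c v)" for c :: "nat \<times> nat \<Rightarrow> nat"
    using assms by (cases s; cases t) (simp_all add: all_bool_eq)
  show ?thesis unfolding invariant_colorings_def ball_axis_reflections single by simp
qed

lemma invariant_colorings_two_reflections:
  assumes "(s, t) \<noteq> (s', t')" "(s, t) \<noteq> (False, False)" "(s', t') \<noteq> (False, False)"
  shows "invariant_colorings (grid_V m n) k {grid_reflection m n s t} \<inter>
      invariant_colorings (grid_V m n) k {grid_reflection m n s' t'} =
    invariant_colorings (grid_V m n) k (axis_reflections m n True True)"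
proof (intro equalityI subsetI)
  fix c assume c: "c \<in> invariant_colorings (grid_V m n) k {grid_reflection m n s t} \<inter>
      invariant_colorings (grid_V m n) k {grid_reflection m n s' t'}"
  then have c_st: "\<And>v. v \<in> grid_V m n \<Longrightarrow> c (grid_reflection m n s t v) = c v"
    and c_st': "\<And>v. v \<in> grid_V m n \<Longrightarrow> c (grid_reflection m n s' t' v) = c v"
    unfolding invariant_colorings_def by auto
  have "c (grid_reflection m n a b v) = c v" if v: "v \<in> grid_V m n" for a b v
  proof -
    have composite: "c (grid_reflection m n (s \<noteq> s') (t \<noteq> t') v) = c v"
    proof -
      have "c (grid_reflection m n (s \<noteq> s') (t \<noteq> t') v) = c (grid_reflection m n s t (grid_reflection m n s' t' v))"
        by (simp only: grid_reflection_comp[OF v])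
      also have "\<dots> = c (grid_reflection m n s' t' v)" by (rule c_st[OF grid_reflection_in[OF v]])
      also have "\<dots> = c v" by (rule c_st'[OF v])
      finally show ?thesis .
    qed
    have "(a, b) = (False, False) \<or> (a, b) = (s, t) \<or> (a, b) = (s', t') \<or> (a, b) = (s \<noteq> s', t \<noteq> t')"
      using assms by (cases a; cases b; cases s; cases t; cases s'; cases t') simp_all
    then show ?thesis
      using c_st[OF v] c_st'[OF v] composite by (elim disjE) simp_all
  qed
  with c show "c \<in> invariant_colorings (grid_V m n) k (axis_reflections m n True True)"
    unfolding invariant_colorings_def ball_axis_reflections by simp
qed (auto simp: invariant_colorings_def ball_axis_reflections)

lemma axis_reflection_in_axis_reflections:
  "grid_reflection m n (s \<and> a) (t \<and> b) \<in> axis_reflections m n s t"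
  unfolding axis_reflections_def by (auto intro: image_eqI[of _ _ "(a, b)"])

definition axis_fold :: "bool \<Rightarrow> nat \<Rightarrow> nat \<Rightarrow> nat" where
  "axis_fold s m i = (if s then min i (m - 1 - i) else i)"

lemma axis_fold_image: "axis_fold s m ` {0..<m} = {0..<(if s then (m + 1) div 2 else m)}"
proof (cases s)
  case True
  have "min i (m - 1 - i) < (m + 1) div 2" if "i < m" for i
    using that by linarith
  moreover have "x \<in> (\<lambda>i. min i (m - 1 - i)) ` {0..<m}" if "x < (m + 1) div 2" for x
    using that by (intro image_eqI[of _ _ x]) auto
  ultimately show ?thesis using True unfolding axis_fold_def by auto
qed (simp add: axis_fold_def)

lemma card_invariant_colorings_axis_reflections:
  "card (invariant_colorings (grid_V m n) k (axis_reflections m n s t)) =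
    k ^ ((if s then (m + 1) div 2 else m) * (if t then (n + 1) div 2 else n))"
proof -
  let ?r = "map_prod (axis_fold s m) (axis_fold t n)"
  have "card (invariant_colorings (grid_V m n) k (axis_reflections m n s t)) = k ^ card (?r ` grid_V m n)"
  proof (rule card_invariant_colorings)
    show "finite (grid_V m n)" by (simp add: grid_V_eq)
    show "\<forall>g\<in>axis_reflections m n s t. g ` grid_V m n \<subseteq> grid_V m n"
      unfolding ball_axis_reflections using grid_reflection_in by blast
    show "\<forall>v\<in>grid_V m n. ?r v = v \<or> (\<exists>g\<in>axis_reflections m n s t. ?r v = g v)"
    proof
      fix v :: "nat \<times> nat"
      have "?r v = grid_reflection m n (s \<and> m - 1 - fst v < fst v) (t \<and> n - 1 - snd v < snd v) v"
        unfolding axis_fold_def grid_reflection_def by (auto simp: min_def prod_eq_iff)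
      then show "?r v = v \<or> (\<exists>g\<in>axis_reflections m n s t. ?r v = g v)"
        using axis_reflection_in_axis_reflections by blast
    qed
    show "\<forall>g\<in>axis_reflections m n s t. \<forall>v\<in>grid_V m n. ?r (g v) = ?r v"
      unfolding ball_axis_reflections axis_fold_def grid_reflection_def grid_V_eq
      by (auto simp: min_def)
  qed
  moreover have "?r ` grid_V m n = axis_fold s m ` {0..<m} \<times> axis_fold t n ` {0..<n}"
    unfolding grid_V_eq by (rule map_prod_surj_on) auto
  ultimately show ?thesis by (simp add: axis_fold_image card_cartesian_product)
qed

definition row_major :: "nat \<Rightarrow> nat \<times> nat \<Rightarrow> nat" where
  "row_major n v = fst v * n + snd v"

lemma bij_betw_row_major: "bij_betw (row_major n) (grid_V m n) {0..<m * n}"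
proof (rule bij_betwI[where g = "\<lambda>x. (x div n, x mod n)"])
  show "row_major n \<in> grid_V m n \<rightarrow> {0..<m * n}"
  proof
    fix v assume "v \<in> grid_V m n"
    then have "fst v + 1 \<le> m" "snd v < n" by (auto simp: grid_V_eq)
    then have "fst v * n + snd v < (fst v + 1) * n" "(fst v + 1) * n \<le> m * n"
      by (simp, intro mult_le_mono1)
    then show "row_major n v \<in> {0..<m * n}" unfolding row_major_def by simp
  qed
  show "(\<lambda>x. (x div n, x mod n)) \<in> {0..<m * n} \<rightarrow> grid_V m n"
  proof
    fix x assume "x \<in> {0..<m * n}"
    then have "x < m * n" "n > 0" by (auto intro: gr0I)
    then show "(x div n, x mod n) \<in> grid_V m n" by (simp add: grid_V_eq less_mult_imp_div_less)
  qed
  show "(row_major n v div n, row_major n v mod n) = v" if "v \<in> grid_V m n" for v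
    using that unfolding row_major_def by (auto simp: grid_V_eq)
  show "row_major n (x div n, x mod n) = x" for x
    unfolding row_major_def by simp
qed

lemma row_major_rotation:
  assumes "v \<in> grid_V m n"
  shows "row_major n v + row_major n (grid_reflection m n True True v) + 1 = m * n"
proof -
  obtain i j where v: "v = (i, j)" "i < m" "j < n" using assms by (auto simp: grid_V_eq)
  have "m * n = (i + (m - 1 - i) + 1) * n" using v(2) by simp
  also have "\<dots> = i * n + (m - 1 - i) * n + n" by (simp only: add_mult_distrib mult_1)
  finally show ?thesis using v unfolding row_major_def grid_reflection_def by simp
qed

lemma card_row_major_lower_half:
  "card {v \<in> grid_V m n. 2 * row_major n v < m * n} = (m * n + 1) div 2"
proof -
  have "bij_betw (row_major n) {v \<in> grid_V m n. 2 * row_major n v < m * n} {x \<in> {0..<m * n}. 2 * x < m * n}"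
    by (rule bij_betw_Collect[OF bij_betw_row_major]) simp
  moreover have "{x \<in> {0..<m * n}. 2 * x < m * n} = {0..<(m * n + 1) div 2}" by auto
  ultimately show ?thesis by (simp add: bij_betw_same_card)
qed

lemma card_invariant_colorings_rotation:
  "card (invariant_colorings (grid_V m n) k {grid_reflection m n True True}) = k ^ ((m * n + 1) div 2)"
proof -
  let ?\<rho> = "grid_reflection m n True True"
  let ?r = "\<lambda>v. if 2 * row_major n v < m * n then v else ?\<rho> v"
  have r_rotation: "?r (?\<rho> v) = ?r v" if v: "v \<in> grid_V m n" for v
  proof -
    have sum: "row_major n v + row_major n (?\<rho> v) + 1 = m * n" by (rule row_major_rotation[OF v])
    show ?thesis
    proof (cases "2 * row_major n v < m * n \<and> 2 * row_major n (?\<rho> v) < m * n")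
      case True
      txt \<open>Then both indices equal \<open>(m * n - 1) div 2\<close>: \<open>v\<close> is the centre of the grid.\<close>
      then have "row_major n (?\<rho> v) = row_major n v" using sum by linarith
      then have "?\<rho> v = v"
        using bij_betw_row_major[THEN bij_betw_imp_inj_on] grid_reflection_in[OF v] v
        by (meson inj_onD)
      then show ?thesis by simp
    next
      case False
      then show ?thesis using sum v by auto
    qed
  qed
  have "card (invariant_colorings (grid_V m n) k {?\<rho>}) = k ^ card (?r ` grid_V m n)"
  proof (rule card_invariant_colorings)
    show "finite (grid_V m n)" by (simp add: grid_V_eq)
    show "\<forall>g\<in>{?\<rho>}. g ` grid_V m n \<subseteq> grid_V m n" using grid_reflection_in by blast
    show "\<forall>v\<in>grid_V m n. ?r v = v \<or> (\<exists>g\<in>{?\<rho>}. ?r v = g v)" by simp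
    show "\<forall>g\<in>{?\<rho>}. \<forall>v\<in>grid_V m n. ?r (g v) = ?r v"
    proof (intro ballI)
      fix g v assume "g \<in> {?\<rho>}" "v \<in> grid_V m n"
      with r_rotation show "?r (g v) = ?r v" by blast
    qed
  qed
  moreover have "?r ` grid_V m n = {v \<in> grid_V m n. 2 * row_major n v < m * n}"
  proof (intro equalityI subsetI)
    fix x assume "x \<in> ?r ` grid_V m n"
    then obtain v where v: "v \<in> grid_V m n" "x = ?r v" by blast
    then show "x \<in> {v \<in> grid_V m n. 2 * row_major n v < m * n}"
      using row_major_rotation[OF v(1)] grid_reflection_in[OF v(1)] by auto
  next
    fix x assume "x \<in> {v \<in> grid_V m n. 2 * row_major n v < m * n}"
    then show "x \<in> ?r ` grid_V m n" by (intro image_eqI[of _ _ x]) simp_all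
  qed
  ultimately show ?thesis by (simp add: card_row_major_lower_half)
qed

section \<open>The number of distinguishing colorings\<close>

lemma card_distinguishing_grid_colorings:
  assumes mn: "m \<ge> 2" "n \<ge> 2" "m \<noteq> n"
  shows "card {c \<in> colorings (grid_V m n) k. distinguishing (grid_V m n) grid_E c}
      + k ^ (n * ((m + 1) div 2)) + k ^ (m * ((n + 1) div 2)) + k ^ ((m * n + 1) div 2)
    = k ^ (m * n) + 2 * k ^ ((m + 1) div 2 * ((n + 1) div 2))"
proof -
  let ?C = "colorings (grid_V m n) k"
  let ?inv = "\<lambda>s t. invariant_colorings (grid_V m n) k {grid_reflection m n s t}"
  let ?U = "?inv True False \<union> ?inv False True \<union> ?inv True True"
  let ?B = "invariant_colorings (grid_V m n) k (axis_reflections m n True True)"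
  have D: "{c \<in> ?C. distinguishing (grid_V m n) grid_E c} = ?C - ?U"
    by (rule distinguishing_grid_colorings[OF mn])
  have finite_C: "finite ?C"
    unfolding colorings_def by (simp add: grid_V_eq finite_PiE)
  have subset: "?inv s t \<subseteq> ?C" for s t
    unfolding invariant_colorings_def by blast
  then have finite_inv: "finite (?inv s t)" for s t
    using finite_C by (rule finite_subset)
  have "card ?U + 2 * card ?B =
      card (?inv True False) + card (?inv False True) + card (?inv True True)"
    by (rule card_Un3_pairwise_Int_eq[OF finite_inv finite_inv finite_inv])
      (simp_all add: invariant_colorings_two_reflections)
  moreover have "card (?C - ?U) + card ?U = card ?C"
  proof -
    have U: "?U \<subseteq> ?C" using subset by blast
    show ?thesis
      using card_mono[OF finite_C U] card_Diff_subset[OF finite_subset[OF U finite_C] U] by simp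
  qed
  moreover have "card ?C = k ^ (m * n)"
    by (simp add: card_colorings grid_V_eq card_cartesian_product)
  moreover have "card (?inv True False) = k ^ (n * ((m + 1) div 2))"
    using card_invariant_colorings_axis_reflections[of m n k True False]
    by (simp add: invariant_colorings_axis_reflections mult.commute)
  moreover have "card (?inv False True) = k ^ (m * ((n + 1) div 2))"
    using card_invariant_colorings_axis_reflections[of m n k False True]
    by (simp add: invariant_colorings_axis_reflections)
  moreover have "card (?inv True True) = k ^ ((m * n + 1) div 2)"
    by (rule card_invariant_colorings_rotation)
  moreover have "card ?B = k ^ ((m + 1) div 2 * ((n + 1) div 2))"
    using card_invariant_colorings_axis_reflections[of m n k True True] by simp
  ultimately show ?thesis unfolding D by linarith
qed

lemma nat_ceiling_half: "nat \<lceil>real x / 2\<rceil> = (x + 1) div 2"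
proof -
  have "\<lceil>real x / 2\<rceil> = int ((x + 1) div 2)"
    by (rule ceiling_unique) linarith+
  then show ?thesis by simp
qed

theorem theorem5p1:
  fixes m n k :: nat
  assumes "m \<ge> 2" "n \<ge> 2" "m \<noteq> n" "k \<ge> 2"
  shows "real (Phi k (cart_V (path_V m) (path_V n)) (cart_E path_E path_E)) =
    (1/4) * (real k ^ (m * n)
             - real k ^ (m * nat \<lceil>real n / 2\<rceil>)
             - real k ^ (n * nat \<lceil>real m / 2\<rceil>)
             - real k ^ (nat \<lceil>real (m * n) / 2\<rceil>)
             + 2 * real k ^ (nat \<lceil>real m / 2\<rceil> * nat \<lceil>real n / 2\<rceil>))"
proof -
  have mn: "m \<ge> 2" "n \<ge> 2" "m \<noteq> n" using assms by auto
  have "card {c \<in> colorings (grid_V m n) k. distinguishing (grid_V m n) grid_E c} =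
      4 * Phi k (grid_V m n) grid_E"
    using card_distinguishing_colorings[of "grid_V m n" k grid_E] card_automorphisms_grid[OF mn]
    by (simp add: grid_V_eq)
  with card_distinguishing_grid_colorings[OF mn, of k]
  have "real (4 * Phi k (grid_V m n) grid_E + k ^ (n * ((m + 1) div 2)) + k ^ (m * ((n + 1) div 2))
      + k ^ ((m * n + 1) div 2)) = real (k ^ (m * n) + 2 * k ^ ((m + 1) div 2 * ((n + 1) div 2)))"
    by simp
  then show ?thesis
    unfolding nat_ceiling_half by simp
qed

end
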